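(* Let $X$ be an infinite h-homogeneous zero-dimensional compact Hausdorff space, $G=\mathrm{Homeo}(X)$, $k\ge1$ and $T\in\{1,-1\}^{S_k}$. Define $\phi_T:\Phi(X)\to\Omega_k$ by $\phi_T(c)(\beta)=T(\theta_\beta(c))$. Then $\phi_T$ is continuous and $G$-equivariant.
   Context: h-homogeneous: every nonempty clopen subset of $X$ is homeomorphic to $X$. $\Phi(X)\subset\mathrm{Exp}(\mathrm{Exp}(X))$ is the compact space of maximal chains of nonempty closed subsets of $X$ (Vietoris topologies), with $gc=\{gF:F\in c\}$. $\mathcal D_k$ is the set of ordered partitions $(B_1,\dots,B_k)$ of $X$ into $k$ nonempty clopen sets, with $G$ acting piecewise and $S_k$ acting by $\sigma(B_1,\dots,B_k)=(B_{\sigma(1)},\dots,B_{\sigma(k)})$. $\Omega_k=\{1,-1\}^{\mathcal D_k}$ with the product topology and $G$-action $(g\omega)(\beta)=\omega(g^{-1}\beta)$. For $c\in\Phi(X)$ and nonempty closed $D$, $D_c=\bigcap\{A\in c:A\cap D\ne\emptyset\}$; for $\beta\in\mathcal D_k$, $t^*_c(\beta)$ lists the pieces of $\beta$ in increasing order with respect to $B_i<_cB_j\iff (B_i)_c\subseteq(B_j)_c$, and $\theta_\beta(c)\in S_k$ is the unique permutation with $\theta_\beta(c)\beta=t^*_c(\beta)$. *)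

theory Defs
  imports "HOL-Analysis.Analysis" "HOL-Combinatorics.Permutations"
begin

definition h_homogeneous :: "'a topology \<Rightarrow> bool" where
  "h_homogeneous X \<longleftrightarrow>
     (\<forall>U. openin X U \<and> closedin X U \<and> U \<noteq> {} \<longrightarrow> subtopology X U homeomorphic_space X)"

definition Exp :: "'a topology \<Rightarrow> 'a set set" where
  "Exp X = {A. closedin X A \<and> A \<noteq> {}}"

definition vietoris :: "'a topology \<Rightarrow> 'a set topology" where
  "vietoris X = topology_generated_by
     ({{A \<in> Exp X. A \<subseteq> U} | U. openin X U} \<union> {{A \<in> Exp X. A \<inter> U \<noteq> {}} | U. openin X U})"

definition is_chain_Exp :: "'a topology \<Rightarrow> 'a set set \<Rightarrow> bool" where
  "is_chain_Exp X c \<longleftrightarrow> c \<subseteq> Exp X \<and> (\<forall>A\<in>c. \<forall>B\<in>c. A \<subseteq> B \<or> B \<subseteq> A)"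

definition Phi :: "'a topology \<Rightarrow> 'a set set set" where
  "Phi X = {c \<in> Exp (vietoris X). is_chain_Exp X c \<and>
             (\<forall>d. is_chain_Exp X d \<and> c \<subseteq> d \<longrightarrow> d = c)}"

definition Phi_top :: "'a topology \<Rightarrow> 'a set set topology" where
  "Phi_top X = subtopology (vietoris (vietoris X)) (Phi X)"

definition act_chain :: "('a \<Rightarrow> 'a) \<Rightarrow> 'a set set \<Rightarrow> 'a set set" where
  "act_chain g c = {g ` F | F. F \<in> c}"

text \<open>D_k: ordered partitions (B_1,...,B_k) of X into k nonempty clopen sets,
  represented as lists of length k (index i-1 holds B_i).\<close>
definition Dk :: "'a topology \<Rightarrow> nat \<Rightarrow> 'a set list set" where
  "Dk X k = {\<beta>. length \<beta> = k \<and>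
     (\<forall>i<k. openin X (\<beta>!i) \<and> closedin X (\<beta>!i) \<and> \<beta>!i \<noteq> {}) \<and>
     (\<forall>i<k. \<forall>j<k. i \<noteq> j \<longrightarrow> \<beta>!i \<inter> \<beta>!j = {}) \<and>
     \<Union>(set \<beta>) = topspace X}"

definition act_D :: "('a \<Rightarrow> 'a) \<Rightarrow> 'a set list \<Rightarrow> 'a set list" where
  "act_D g \<beta> = map (\<lambda>B. g ` B) \<beta>"

definition perm_act :: "(nat \<Rightarrow> nat) \<Rightarrow> 'a set list \<Rightarrow> 'a set list" where
  "perm_act \<sigma> \<beta> = map (\<lambda>i. \<beta> ! \<sigma> i) [0..<length \<beta>]"

definition Omega_top :: "'a topology \<Rightarrow> nat \<Rightarrow> ('a set list \<Rightarrow> int) topology" where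
  "Omega_top X k = product_topology (\<lambda>_. discrete_topology {1, -1}) (Dk X k)"

definition act_Omega :: "'a topology \<Rightarrow> nat \<Rightarrow> ('a \<Rightarrow> 'a) \<Rightarrow> ('a set list \<Rightarrow> int) \<Rightarrow> ('a set list \<Rightarrow> int)" where
  "act_Omega X k g \<omega> = restrict (\<lambda>\<beta>. \<omega> (act_D (inv_into (topspace X) g) \<beta>)) (Dk X k)"

definition Dc :: "'a set set \<Rightarrow> 'a set \<Rightarrow> 'a set" where
  "Dc c D = \<Inter>{A \<in> c. A \<inter> D \<noteq> {}}"

definition t_star :: "'a set set \<Rightarrow> 'a set list \<Rightarrow> 'a set list" where
  "t_star c \<beta> = (THE l. (\<exists>\<sigma>. \<sigma> permutes {..<length \<beta>} \<and> l = perm_act \<sigma> \<beta>) \<and>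
                        sorted_wrt (\<lambda>A B. Dc c A \<subseteq> Dc c B) l)"

definition theta :: "'a set list \<Rightarrow> 'a set set \<Rightarrow> (nat \<Rightarrow> nat)" where
  "theta \<beta> c = (THE \<sigma>. \<sigma> permutes {..<length \<beta>} \<and> perm_act \<sigma> \<beta> = t_star c \<beta>)"

definition phi_T :: "'a topology \<Rightarrow> nat \<Rightarrow> ((nat \<Rightarrow> nat) \<Rightarrow> int) \<Rightarrow> 'a set set \<Rightarrow> ('a set list \<Rightarrow> int)" where
  "phi_T X k T c = restrict (\<lambda>\<beta>. T (theta \<beta> c)) (Dk X k)"

end

theory Submission
  imports Defs
begin

text \<open>
  For a maximal chain \<open>c\<close> of closed sets and a closed piece \<open>B\<close>, the set \<open>D\<^sub>c(B)\<close> is the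
  intersection of the members of \<open>c\<close> meeting \<open>B\<close>; by compactness it still meets \<open>B\<close>.
  The sets \<open>D\<^sub>c(B)\<close> are linearly ordered, and maximality of \<open>c\<close> separates them for disjoint
  clopen pieces, so the pieces of a partition \<open>\<beta>\<close> are strictly ordered and \<open>\<theta>\<^sub>\<beta>(c)\<close> is
  the unique permutation sorting them. \<open>B\<close> fails to precede \<open>B'\<close> exactly when some member
  of \<open>c\<close> meets \<open>B'\<close> but misses \<open>B\<close>, an open condition in the Vietoris topology; hence
  \<open>c \<mapsto> \<theta>\<^sub>\<beta>(c)\<close> is locally constant. A homeomorphism \<open>g\<close> maps \<open>D\<^sub>c(B)\<close> onto
  \<open>D\<^sub>g\<^sub>c(gB)\<close>, so it preserves the order of the pieces, which gives equivariance.
\<close>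

section \<open>Sorting permutations\<close>

lemma sorted_wrt_unique:
  assumes "distinct xs" "distinct ys" "set xs = set ys" "sorted_wrt R xs" "sorted_wrt R ys"
    and "\<And>x y. x \<in> set xs \<Longrightarrow> y \<in> set xs \<Longrightarrow> R x y \<Longrightarrow> R y x \<Longrightarrow> x = y"
  shows "xs = ys"
  using assms
proof (induction xs arbitrary: ys)
  case Nil
  then show ?case by simp
next
  case (Cons x xs)
  then obtain y ys' where ys: "ys = y # ys'" by (cases ys) auto
  have "x = y"
  proof (rule ccontr)
    assume "x \<noteq> y"
    then have "x \<in> set ys'" "y \<in> set xs" using Cons.prems(3) ys by auto
    then have "R y x" "R x y" using Cons.prems(4,5) ys by auto
    then show False using Cons.prems(6) \<open>x \<noteq> y\<close> \<open>y \<in> set xs\<close> by auto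
  qed
  moreover have "set xs = set ys'"
    using Cons.prems(1-3) ys \<open>x = y\<close> by (metis Diff_insert_absorb distinct.simps(2) list.simps(15))
  then have "xs = ys'"
    using Cons.prems ys by (intro Cons.IH) auto
  ultimately show ?case using ys by simp
qed

lemma ex_sorted_wrt_mset_eq:
  fixes f :: "'a \<Rightarrow> 'b::order"
  assumes "\<forall>x\<in>set xs. \<forall>y\<in>set xs. f x \<le> f y \<or> f y \<le> f x"
  shows "\<exists>ys. mset ys = mset xs \<and> sorted_wrt (\<lambda>x y. f x \<le> f y) ys"
proof -
  define rank where "rank x = card {y \<in> set xs. f y < f x}" for x
  have le: "f x \<le> f y" if "x \<in> set xs" "y \<in> set xs" "rank x \<le> rank y" for x y
  proof (rule ccontr)
    assume "\<not> f x \<le> f y"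
    then have "f y < f x" using assms that by (auto simp: order.strict_iff_not)
    then have "{z \<in> set xs. f z < f y} \<subset> {z \<in> set xs. f z < f x}"
      using that(2) by auto
    then have "rank y < rank x" unfolding rank_def by (intro psubset_card_mono) auto
    then show False using that(3) by simp
  qed
  have "sorted_wrt (\<lambda>x y. rank x \<le> rank y) (sort_key rank xs)"
    using sorted_sort_key[of rank xs] by (simp add: sorted_wrt_map)
  then have "sorted_wrt (\<lambda>x y. f x \<le> f y) (sort_key rank xs)"
    by (rule sorted_wrt_mono_rel[rotated]) (auto intro: le)
  then show ?thesis by (intro exI[of _ "sort_key rank xs"]) simp
qed

lemma permute_list_inj:
  assumes "distinct xs" "\<sigma> permutes {..<length xs}" "\<tau> permutes {..<length xs}"
    and "permute_list \<sigma> xs = permute_list \<tau> xs"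
  shows "\<sigma> = \<tau>"
proof
  fix i
  show "\<sigma> i = \<tau> i"
  proof (cases "i < length xs")
    case True
    then have "xs ! \<sigma> i = xs ! \<tau> i"
      using assms(4) permute_list_nth[OF assms(2)] permute_list_nth[OF assms(3)] by metis
    moreover have "\<sigma> i < length xs" "\<tau> i < length xs"
      using permutes_in_image[OF assms(2)] permutes_in_image[OF assms(3)] True by auto
    ultimately show ?thesis using assms(1) nth_eq_iff_index_eq by blast
  next
    case False
    then show ?thesis using permutes_not_in[OF assms(2)] permutes_not_in[OF assms(3)] by simp
  qed
qed

lemma ex1_sorting_permutation:
  fixes f :: "'a \<Rightarrow> 'b::order"
  assumes "distinct xs" "\<forall>x\<in>set xs. \<forall>y\<in>set xs. f x \<le> f y \<or> f y \<le> f x" "inj_on f (set xs)"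
  shows "\<exists>!\<sigma>. \<sigma> permutes {..<length xs} \<and> sorted_wrt (\<lambda>x y. f x \<le> f y) (permute_list \<sigma> xs)"
proof (rule ex_ex1I)
  obtain ys where "mset ys = mset xs" "sorted_wrt (\<lambda>x y. f x \<le> f y) ys"
    using ex_sorted_wrt_mset_eq[OF assms(2)] by blast
  moreover obtain \<sigma> where "\<sigma> permutes {..<length xs}" "permute_list \<sigma> xs = ys"
    using mset_eq_permutation[OF \<open>mset ys = mset xs\<close>] by blast
  ultimately show "\<exists>\<sigma>. \<sigma> permutes {..<length xs} \<and> sorted_wrt (\<lambda>x y. f x \<le> f y) (permute_list \<sigma> xs)"
    by blast
next
  fix \<sigma> \<tau>
  assume \<sigma>: "\<sigma> permutes {..<length xs} \<and> sorted_wrt (\<lambda>x y. f x \<le> f y) (permute_list \<sigma> xs)"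
    and \<tau>: "\<tau> permutes {..<length xs} \<and> sorted_wrt (\<lambda>x y. f x \<le> f y) (permute_list \<tau> xs)"
  have "permute_list \<sigma> xs = permute_list \<tau> xs"
    using \<sigma> \<tau> assms
    by (intro sorted_wrt_unique[where R="\<lambda>x y. f x \<le> f y"]) (auto simp: inj_on_def intro: order.antisym)
  then show "\<sigma> = \<tau>" using permute_list_inj assms(1) \<sigma> \<tau> by blast
qed

lemma theta_eq_iff:
  assumes "distinct \<beta>" "\<forall>x\<in>set \<beta>. \<forall>y\<in>set \<beta>. Dc c x \<subseteq> Dc c y \<or> Dc c y \<subseteq> Dc c x"
    and "inj_on (Dc c) (set \<beta>)"
  shows "theta \<beta> c = \<sigma> \<longleftrightarrow>
    \<sigma> permutes {..<length \<beta>} \<and> sorted_wrt (\<lambda>A B. Dc c A \<subseteq> Dc c B) (permute_list \<sigma> \<beta>)"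
proof -
  let ?sorting = "\<lambda>\<sigma>. \<sigma> permutes {..<length \<beta>} \<and> sorted_wrt (\<lambda>A B. Dc c A \<subseteq> Dc c B) (permute_list \<sigma> \<beta>)"
  obtain \<sigma>0 where \<sigma>0: "?sorting \<sigma>0" and uniq: "\<And>\<sigma>. ?sorting \<sigma> \<Longrightarrow> \<sigma> = \<sigma>0"
    using ex1_sorting_permutation[OF assms] by blast
  have perm_act: "perm_act \<sigma> \<beta> = permute_list \<sigma> \<beta>" for \<sigma>
    by (simp add: perm_act_def permute_list_def)
  have t_star: "t_star c \<beta> = permute_list \<sigma>0 \<beta>"
    unfolding t_star_def perm_act using \<sigma>0 uniq by (rule_tac the_equality) blast+
  have "theta \<beta> c = \<sigma>0"
    unfolding theta_def perm_act
  proof (rule the_equality)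
    show "\<sigma>0 permutes {..<length \<beta>} \<and> permute_list \<sigma>0 \<beta> = t_star c \<beta>"
      using \<sigma>0 t_star by simp
    show "\<sigma> = \<sigma>0" if "\<sigma> permutes {..<length \<beta>} \<and> permute_list \<sigma> \<beta> = t_star c \<beta>" for \<sigma>
      using permute_list_inj[OF assms(1)] \<sigma>0 t_star that by metis
  qed
  then show ?thesis using \<sigma>0 uniq by blast
qed

lemma theta_map:
  assumes "distinct \<beta>" "\<forall>x\<in>set \<beta>. \<forall>y\<in>set \<beta>. Dc c x \<subseteq> Dc c y \<or> Dc c y \<subseteq> Dc c x"
    and "inj_on (Dc c) (set \<beta>)" "inj_on F (set \<beta>)"
    and "\<And>x y. x \<in> set \<beta> \<Longrightarrow> y \<in> set \<beta> \<Longrightarrow> Dc c' (F x) \<subseteq> Dc c' (F y) \<longleftrightarrow> Dc c x \<subseteq> Dc c y"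
  shows "theta (map F \<beta>) c' = theta \<beta> c"
proof -
  define \<sigma> where "\<sigma> = theta \<beta> c"
  have \<sigma>: "\<sigma> permutes {..<length \<beta>}" "sorted_wrt (\<lambda>A B. Dc c A \<subseteq> Dc c B) (permute_list \<sigma> \<beta>)"
    using theta_eq_iff[OF assms(1-3)] unfolding \<sigma>_def by blast+
  have "distinct (map F \<beta>)"
    using assms(1,4) by (simp add: distinct_map)
  moreover have "\<forall>x\<in>set (map F \<beta>). \<forall>y\<in>set (map F \<beta>). Dc c' x \<subseteq> Dc c' y \<or> Dc c' y \<subseteq> Dc c' x"
    using assms(2,5) by auto
  moreover have "inj_on (Dc c') (set (map F \<beta>))"
    using assms(3,5) by (fastforce simp: inj_on_def)
  moreover have "sorted_wrt (\<lambda>A B. Dc c' A \<subseteq> Dc c' B) (permute_list \<sigma> (map F \<beta>))"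
    unfolding permute_list_map[OF \<sigma>(1)] sorted_wrt_map
    using \<sigma> assms(5) by (rule_tac sorted_wrt_mono_rel[OF _ \<sigma>(2)]) simp
  ultimately show ?thesis
    using theta_eq_iff \<sigma>(1) unfolding \<sigma>_def by (metis length_map)
qed

section \<open>The sets \<open>D\<^sub>c(B)\<close> of a maximal chain\<close>

lemma chain_has_least:
  assumes "finite F" "F \<noteq> {}" "\<And>A B. A \<in> F \<Longrightarrow> B \<in> F \<Longrightarrow> A \<subseteq> B \<or> B \<subseteq> (A::'a set)"
  shows "\<exists>M\<in>F. \<forall>A\<in>F. M \<subseteq> A"
  using assms
proof (induction F rule: finite_ne_induct)
  case (singleton A)
  then show ?case by auto
next
  case (insert A F)
  then obtain M where M: "M \<in> F" "\<forall>B\<in>F. M \<subseteq> B"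
    by (meson insertCI)
  then have "A \<subseteq> M \<or> M \<subseteq> A"
    using insert.prems by simp
  then show ?case
  proof
    assume "A \<subseteq> M"
    then show ?case using M by (intro bexI[of _ A]) auto
  next
    assume "M \<subseteq> A"
    then show ?case using M by (intro bexI[of _ M]) auto
  qed
qed

lemma compact_space_chain_Inter_nonempty:
  assumes "compact_space X" "\<And>C. C \<in> \<U> \<Longrightarrow> closedin X C \<and> C \<noteq> {}"
    and "\<And>C D. C \<in> \<U> \<Longrightarrow> D \<in> \<U> \<Longrightarrow> C \<subseteq> D \<or> D \<subseteq> C"
  shows "\<Inter>\<U> \<noteq> {}"
proof -
  have "\<Inter>\<F> \<noteq> {}" if "finite \<F>" "\<F> \<subseteq> \<U>" for \<F>
  proof (cases "\<F> = {}")
    case False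
    have "\<exists>M\<in>\<F>. \<forall>C\<in>\<F>. M \<subseteq> C"
      using that(2) by (intro chain_has_least[OF that(1) False]) (meson assms(3) subsetD)
    then obtain M where "M \<in> \<F>" "M \<subseteq> \<Inter>\<F>" by blast
    then show ?thesis using assms(2) that(2) by blast
  qed simp
  moreover have "\<forall>C\<in>\<U>. closedin X C"
    using assms(2) by blast
  ultimately show ?thesis
    using assms(1)[unfolded compact_space_fip, rule_format, of \<U>] by (simp only: imp_conjL) blast
qed

lemma Phi_is_chain_Exp: "c \<in> Phi X \<Longrightarrow> is_chain_Exp X c"
  by (simp add: Phi_def)

lemma Phi_maximal:
  assumes "c \<in> Phi X" "closedin X C" "C \<noteq> {}" "\<And>A. A \<in> c \<Longrightarrow> A \<subseteq> C \<or> C \<subseteq> A"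
  shows "C \<in> c"
proof -
  have "is_chain_Exp X (insert C c)"
    using Phi_is_chain_Exp[OF assms(1)] assms(2-4) unfolding is_chain_Exp_def Exp_def by blast
  then have "insert C c = c"
    using assms(1) unfolding Phi_def by blast
  then show ?thesis by blast
qed

lemma topspace_in_Phi:
  assumes "c \<in> Phi X" "topspace X \<noteq> {}"
  shows "topspace X \<in> c"
  using Phi_maximal[OF assms(1) closedin_topspace assms(2)] Phi_is_chain_Exp[OF assms(1)]
  unfolding is_chain_Exp_def Exp_def by (auto dest: closedin_subset)

lemma
  assumes "compact_space X" "is_chain_Exp X c" "topspace X \<in> c" "closedin X B" "B \<noteq> {}"
  shows closedin_Dc: "closedin X (Dc c B)"
    and Dc_Int_nonempty: "Dc c B \<inter> B \<noteq> {}"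
proof -
  let ?P = "{A \<in> c. A \<inter> B \<noteq> {}}"
  have top: "topspace X \<in> ?P"
    using assms(3-5) closedin_subset by fastforce
  have closed: "closedin X A" if "A \<in> c" for A
    using assms(2) that by (auto simp: is_chain_Exp_def Exp_def)
  show "closedin X (Dc c B)"
    unfolding Dc_def using top closed by (intro closedin_Inter) auto
  have "\<Inter>((\<lambda>A. A \<inter> B) ` ?P) \<noteq> {}"
  proof (rule compact_space_chain_Inter_nonempty[OF assms(1)])
    show "closedin X C \<and> C \<noteq> {}" if "C \<in> (\<lambda>A. A \<inter> B) ` ?P" for C
      using that closed assms(4) by auto
    show "C \<subseteq> D \<or> D \<subseteq> C"
      if C: "C \<in> (\<lambda>A. A \<inter> B) ` ?P" and D: "D \<in> (\<lambda>A. A \<inter> B) ` ?P" for C D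
    proof -
      obtain A A' where "A \<in> c" "A' \<in> c" "C = A \<inter> B" "D = A' \<inter> B"
        using C D by blast
      then show ?thesis using assms(2) unfolding is_chain_Exp_def by blast
    qed
  qed
  moreover have "\<Inter>((\<lambda>A. A \<inter> B) ` ?P) = Dc c B \<inter> B"
    using top unfolding Dc_def by auto
  ultimately show "Dc c B \<inter> B \<noteq> {}" by simp
qed

lemma subset_Dc_if_disjoint:
  assumes "is_chain_Exp X c" "A \<in> c" "A \<inter> B = {}"
  shows "A \<subseteq> Dc c B"
  unfolding Dc_def
proof (rule Inter_greatest)
  fix A' assume "A' \<in> {A \<in> c. A \<inter> B \<noteq> {}}"
  then show "A \<subseteq> A'" using assms unfolding is_chain_Exp_def by blast
qed

lemma Dc_subset_Dc_iff:
  assumes "is_chain_Exp X c" "Dc c B \<inter> B \<noteq> {}"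
  shows "Dc c B \<subseteq> Dc c B' \<longleftrightarrow> \<not> (\<exists>A\<in>c. A \<inter> B' \<noteq> {} \<and> A \<inter> B = {})"
proof
  assume le: "Dc c B \<subseteq> Dc c B'"
  show "\<not> (\<exists>A\<in>c. A \<inter> B' \<noteq> {} \<and> A \<inter> B = {})"
  proof
    assume "\<exists>A\<in>c. A \<inter> B' \<noteq> {} \<and> A \<inter> B = {}"
    then obtain A where A: "A \<in> c" "A \<inter> B' \<noteq> {}" "A \<inter> B = {}" by blast
    then have "Dc c B' \<subseteq> A" unfolding Dc_def by blast
    moreover have "A \<subseteq> Dc c B" using subset_Dc_if_disjoint[OF assms(1) A(1,3)] .
    ultimately show False using le A(3) assms(2) by blast
  qed
next
  assume "\<not> (\<exists>A\<in>c. A \<inter> B' \<noteq> {} \<and> A \<inter> B = {})"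
  then show "Dc c B \<subseteq> Dc c B'" unfolding Dc_def by blast
qed

lemma Dc_linear:
  assumes "is_chain_Exp X c"
  shows "Dc c B \<subseteq> Dc c B' \<or> Dc c B' \<subseteq> Dc c B"
proof (rule ccontr)
  assume "\<not> ?thesis"
  then obtain A1 A2 where "A1 \<in> c" "A1 \<inter> B' \<noteq> {}" "A1 \<inter> B = {}"
    and "A2 \<in> c" "A2 \<inter> B \<noteq> {}" "A2 \<inter> B' = {}"
    unfolding Dc_def by blast
  then show False using assms unfolding is_chain_Exp_def by blast
qed

text \<open>If both were equal to \<open>D\<close>, then \<open>D - B\<close> would be a closed set comparable with every
  member of \<open>c\<close>, hence in \<open>c\<close> by maximality; it meets \<open>B'\<close>, so \<open>D \<subseteq> D - B\<close>, although
  \<open>D\<close> meets \<open>B\<close>.\<close>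
lemma Dc_neq_Dc_if_disjoint:
  assumes "c \<in> Phi X" "openin X B" "B \<inter> B' = {}" "Dc c B \<inter> B \<noteq> {}" "Dc c B' \<inter> B' \<noteq> {}"
    and "closedin X (Dc c B)"
  shows "Dc c B \<noteq> Dc c B'"
proof
  assume eq: "Dc c B = Dc c B'"
  define D where "D = Dc c B"
  obtain x y where xy: "x \<in> D" "x \<in> B" "y \<in> D" "y \<in> B'"
    using assms(4,5) eq unfolding D_def by blast
  have "D - B \<in> c"
  proof (rule Phi_maximal[OF assms(1)])
    show "closedin X (D - B)" unfolding D_def using assms(2,6) by (simp add: closedin_diff)
    show "D - B \<noteq> {}" using xy assms(3) by blast
  next
    fix A assume A: "A \<in> c"
    show "A \<subseteq> D - B \<or> D - B \<subseteq> A"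
    proof (cases "A \<inter> B = {}")
      case False
      then have "D \<subseteq> A" using A unfolding D_def Dc_def by blast
      then show ?thesis by blast
    next
      case True
      then show ?thesis using subset_Dc_if_disjoint[OF Phi_is_chain_Exp[OF assms(1)] A True]
        unfolding D_def by blast
    qed
  qed
  moreover have "y \<in> D - B" using xy assms(3) by blast
  ultimately have "Dc c B' \<subseteq> D - B" using xy unfolding Dc_def by blast
  then show False using xy eq unfolding D_def by blast
qed

lemma
  assumes "\<beta> \<in> Dk X k"
  shows Dk_length: "length \<beta> = k"
    and Dk_distinct: "distinct \<beta>"
    and Dk_clopen: "B \<in> set \<beta> \<Longrightarrow> openin X B \<and> closedin X B \<and> B \<noteq> {}"
    and Dk_disjoint: "A \<in> set \<beta> \<Longrightarrow> B \<in> set \<beta> \<Longrightarrow> A \<noteq> B \<Longrightarrow> A \<inter> B = {}"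
proof -
  have len: "length \<beta> = k" and nth: "\<forall>i<k. openin X (\<beta>!i) \<and> closedin X (\<beta>!i) \<and> \<beta>!i \<noteq> {}"
    and disj: "\<forall>i<k. \<forall>j<k. i \<noteq> j \<longrightarrow> \<beta>!i \<inter> \<beta>!j = {}"
    using assms unfolding Dk_def by auto
  show "length \<beta> = k"
    using len .
  show "B \<in> set \<beta> \<Longrightarrow> openin X B \<and> closedin X B \<and> B \<noteq> {}"
    using len nth by (auto simp: in_set_conv_nth)
  show "A \<in> set \<beta> \<Longrightarrow> B \<in> set \<beta> \<Longrightarrow> A \<noteq> B \<Longrightarrow> A \<inter> B = {}"
    using len disj by (auto simp: in_set_conv_nth)
  show "distinct \<beta>"
    unfolding distinct_conv_nth using len nth disj by fastforce
qed

lemma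
  assumes "compact_space X" "c \<in> Phi X" "topspace X \<noteq> {}" "\<beta> \<in> Dk X k" "B \<in> set \<beta>"
  shows closedin_Dc_Dk: "closedin X (Dc c B)"
    and Dc_Int_nonempty_Dk: "Dc c B \<inter> B \<noteq> {}"
  using closedin_Dc[OF assms(1) Phi_is_chain_Exp[OF assms(2)] topspace_in_Phi[OF assms(2,3)]]
    Dc_Int_nonempty[OF assms(1) Phi_is_chain_Exp[OF assms(2)] topspace_in_Phi[OF assms(2,3)]]
    Dk_clopen[OF assms(4,5)]
  by auto

lemma inj_on_Dc_Dk:
  assumes "compact_space X" "c \<in> Phi X" "topspace X \<noteq> {}" "\<beta> \<in> Dk X k"
  shows "inj_on (Dc c) (set \<beta>)"
proof (rule inj_onI, rule ccontr)
  fix x y assume xy: "x \<in> set \<beta>" "y \<in> set \<beta>" "Dc c x = Dc c y" "x \<noteq> y"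
  have "Dc c x \<noteq> Dc c y"
    using Dc_neq_Dc_if_disjoint[OF assms(2) _ Dk_disjoint[OF assms(4) xy(1,2,4)]]
      Dc_Int_nonempty_Dk[OF assms] closedin_Dc_Dk[OF assms] Dk_clopen[OF assms(4)] xy(1,2) by blast
  then show False using xy(3) by blast
qed

lemma theta_Dk_eq_iff:
  assumes "compact_space X" "c \<in> Phi X" "topspace X \<noteq> {}" "\<beta> \<in> Dk X k"
  shows "theta \<beta> c = \<sigma> \<longleftrightarrow>
    \<sigma> permutes {..<k} \<and> sorted_wrt (\<lambda>A B. Dc c A \<subseteq> Dc c B) (permute_list \<sigma> \<beta>)"
  using theta_eq_iff[OF Dk_distinct[OF assms(4)] _ inj_on_Dc_Dk[OF assms]]
    Dc_linear[OF Phi_is_chain_Exp[OF assms(2)]] Dk_length[OF assms(4)] by blast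

section \<open>Continuity\<close>

lemma topspace_vietoris: "topspace (vietoris X) = Exp X"
proof -
  let ?S = "{{A \<in> Exp X. A \<subseteq> U} | U. openin X U} \<union> {{A \<in> Exp X. A \<inter> U \<noteq> {}} | U. openin X U}"
  have "Exp X = {A \<in> Exp X. A \<subseteq> topspace X}"
    unfolding Exp_def by (auto dest: closedin_subset)
  also have "\<dots> \<subseteq> \<Union>?S"
    using openin_topspace by (intro Union_upper) blast
  finally have "Exp X \<subseteq> \<Union>?S" .
  moreover have "\<Union>?S \<subseteq> Exp X"
    by (rule Union_least) blast
  ultimately show ?thesis
    unfolding vietoris_def topology_generated_by_topspace by (rule subset_antisym[symmetric])
qed

lemma openin_vietoris_hit: "openin X U \<Longrightarrow> openin (vietoris X) {A \<in> Exp X. A \<inter> U \<noteq> {}}"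
  unfolding vietoris_def openin_topology_generated_by_iff
  by (rule generate_topology_on.Basis) blast

lemma openin_vietoris_sub: "openin X U \<Longrightarrow> openin (vietoris X) {A \<in> Exp X. A \<subseteq> U}"
  unfolding vietoris_def openin_topology_generated_by_iff
  by (rule generate_topology_on.Basis) blast

lemma topspace_Phi_top: "topspace (Phi_top X) = Phi X"
  unfolding Phi_top_def topspace_subtopology topspace_vietoris Phi_def by blast

lemma openin_Phi_top_hit_miss:
  assumes "openin X U" "closedin X B"
  shows "openin (Phi_top X) {c \<in> Phi X. \<exists>E\<in>c. E \<inter> U \<noteq> {} \<and> E \<inter> B = {}}"
proof -
  define W where "W = {A \<in> Exp X. A \<inter> U \<noteq> {}} \<inter> {A \<in> Exp X. A \<subseteq> topspace X - B}"
  have "openin (vietoris X) W"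
    unfolding W_def using assms
    by (intro openin_Int openin_vietoris_hit openin_vietoris_sub openin_diff) auto
  then have "openin (Phi_top X) (Phi X \<inter> {c \<in> Exp (vietoris X). c \<inter> W \<noteq> {}})"
    unfolding Phi_top_def by (intro openin_subtopology_Int2 openin_vietoris_hit)
  moreover have "Phi X \<inter> {c \<in> Exp (vietoris X). c \<inter> W \<noteq> {}} =
      {c \<in> Phi X. \<exists>E\<in>c. E \<inter> U \<noteq> {} \<and> E \<inter> B = {}}"
  proof -
    have "c \<inter> W \<noteq> {} \<longleftrightarrow> (\<exists>E\<in>c. E \<inter> U \<noteq> {} \<and> E \<inter> B = {})" if "c \<in> Phi X" for c
    proof -
      have "E \<in> W \<longleftrightarrow> E \<inter> U \<noteq> {} \<and> E \<inter> B = {}" if "E \<in> c" for E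
      proof -
        have "E \<in> Exp X"
          using Phi_is_chain_Exp[OF \<open>c \<in> Phi X\<close>] that unfolding is_chain_Exp_def by blast
        moreover have "E \<subseteq> topspace X"
          using calculation unfolding Exp_def by (simp add: closedin_subset)
        ultimately show ?thesis unfolding W_def by blast
      qed
      then show ?thesis by (meson disjoint_iff)
    qed
    moreover have "Phi X \<subseteq> Exp (vietoris X)"
      unfolding Phi_def by blast
    ultimately show ?thesis by auto
  qed
  ultimately show ?thesis by simp
qed

lemma openin_Phi_top_Dc_subset_eq:
  assumes "compact_space X" "topspace X \<noteq> {}" "\<beta> \<in> Dk X k" "x \<in> set \<beta>" "y \<in> set \<beta>"
  shows "openin (Phi_top X) {c \<in> Phi X. (Dc c x \<subseteq> Dc c y) = b}"
proof -
  have not_subset: "openin (Phi_top X) {c \<in> Phi X. \<not> Dc c a \<subseteq> Dc c a'}"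
    if "a \<in> set \<beta>" "a' \<in> set \<beta>" for a a'
  proof -
    have "\<not> Dc c a \<subseteq> Dc c a' \<longleftrightarrow> (\<exists>E\<in>c. E \<inter> a' \<noteq> {} \<and> E \<inter> a = {})" if "c \<in> Phi X" for c
      using Dc_subset_Dc_iff[OF Phi_is_chain_Exp[OF that] Dc_Int_nonempty_Dk[OF assms(1) that assms(2,3)]]
        \<open>a \<in> set \<beta>\<close> by simp
    then have "{c \<in> Phi X. \<not> Dc c a \<subseteq> Dc c a'} = {c \<in> Phi X. \<exists>E\<in>c. E \<inter> a' \<noteq> {} \<and> E \<inter> a = {}}"
      by (intro Collect_cong conj_cong refl) simp
    then show ?thesis
      using openin_Phi_top_hit_miss[of X a' a] Dk_clopen[OF assms(3)] that by simp
  qed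
  show ?thesis
  proof (cases b)
    case False
    then show ?thesis using not_subset[OF assms(4,5)] by simp
  next
    case True
    show ?thesis
    proof (cases "x = y")
      case True
      then show ?thesis using \<open>b\<close> by (simp flip: topspace_Phi_top)
    next
      case False
      have "Dc c x \<subseteq> Dc c y \<longleftrightarrow> \<not> Dc c y \<subseteq> Dc c x" if "c \<in> Phi X" for c
      proof -
        have "Dc c x \<noteq> Dc c y"
          using inj_on_Dc_Dk[OF assms(1) that assms(2,3)] assms(4,5) False by (meson inj_onD)
        then show ?thesis using Dc_linear[OF Phi_is_chain_Exp[OF that]] by blast
      qed
      then have "{c \<in> Phi X. (Dc c x \<subseteq> Dc c y) = b} = {c \<in> Phi X. \<not> Dc c y \<subseteq> Dc c x}"
        using \<open>b\<close> by (intro Collect_cong conj_cong refl) simp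
      then show ?thesis using not_subset[OF assms(5,4)] by simp
    qed
  qed
qed

lemma continuous_map_discrete_topology_if_locally_constant:
  assumes "f \<in> topspace X \<rightarrow> U"
    and "\<And>x. x \<in> topspace X \<Longrightarrow> \<exists>V. openin X V \<and> x \<in> V \<and> (\<forall>y\<in>V. f y = f x)"
  shows "continuous_map X (discrete_topology U) f"
  unfolding continuous_map_openin_preimage_eq
proof (intro conjI allI impI)
  show "f \<in> topspace X \<rightarrow> topspace (discrete_topology U)"
    using assms(1) by simp
  fix W
  show "openin X (topspace X \<inter> f -` W)"
  proof (subst openin_subopen, intro ballI)
    fix x assume x: "x \<in> topspace X \<inter> f -` W"
    then obtain V where V: "openin X V" "x \<in> V" "\<forall>y\<in>V. f y = f x"
      using assms(2) by (meson IntD1)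
    have "f y \<in> W" if "y \<in> V" for y
      using V(3) that x by simp
    then have "V \<subseteq> topspace X \<inter> f -` W"
      using openin_subset[OF V(1)] by blast
    then show "\<exists>V. openin X V \<and> x \<in> V \<and> V \<subseteq> topspace X \<inter> f -` W"
      using V by blast
  qed
qed

lemma continuous_map_phi_T:
  assumes "compact_space X" "topspace X \<noteq> {}" "\<And>\<sigma>. \<sigma> permutes {..<k} \<Longrightarrow> T \<sigma> \<in> {1, -1}"
  shows "continuous_map (Phi_top X) (Omega_top X k) (phi_T X k T)"
  unfolding Omega_top_def continuous_map_componentwise
proof (intro conjI ballI)
  show "phi_T X k T ` topspace (Phi_top X) \<subseteq> extensional (Dk X k)"
    unfolding phi_T_def by auto
  fix \<beta> assume \<beta>: "\<beta> \<in> Dk X k"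
  show "continuous_map (Phi_top X) (discrete_topology {1, -1}) (\<lambda>c. phi_T X k T c \<beta>)"
  proof (rule continuous_map_discrete_topology_if_locally_constant)
    show "(\<lambda>c. phi_T X k T c \<beta>) \<in> topspace (Phi_top X) \<rightarrow> {1, -1}"
      using theta_Dk_eq_iff[OF assms(1) _ assms(2) \<beta>] assms(3) \<beta>
      by (auto simp: topspace_Phi_top phi_T_def)
    fix c0 assume c0: "c0 \<in> topspace (Phi_top X)"
    define V where "V = Phi X \<inter>
      (\<Inter>(x, y)\<in>set \<beta> \<times> set \<beta>. {c \<in> Phi X. (Dc c x \<subseteq> Dc c y) = (Dc c0 x \<subseteq> Dc c0 y)})"
    have "openin (Phi_top X) V"
      unfolding V_def using openin_Phi_top_Dc_subset_eq[OF assms(1,2) \<beta>]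
      by (intro openin_Int_Inter) (auto simp flip: topspace_Phi_top)
    moreover have "c0 \<in> V"
      using c0 by (auto simp: V_def topspace_Phi_top)
    moreover have "phi_T X k T c \<beta> = phi_T X k T c0 \<beta>" if "c \<in> V" for c
    proof -
      have c0: "c0 \<in> Phi X" using c0 by (simp add: topspace_Phi_top)
      have "Dc c x \<subseteq> Dc c y \<longleftrightarrow> Dc c0 x \<subseteq> Dc c0 y" if "x \<in> set \<beta>" "y \<in> set \<beta>" for x y
        using \<open>c \<in> V\<close> that unfolding V_def by blast
      then have "theta (map id \<beta>) c = theta \<beta> c0"
        using Dc_linear[OF Phi_is_chain_Exp[OF c0]]
        by (intro theta_map Dk_distinct[OF \<beta>] inj_on_Dc_Dk[OF assms(1) c0 assms(2) \<beta>]) auto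
      then show ?thesis by (simp add: phi_T_def \<beta>)
    qed
    ultimately show "\<exists>V. openin (Phi_top X) V \<and> c0 \<in> V \<and> (\<forall>c\<in>V. phi_T X k T c \<beta> = phi_T X k T c0 \<beta>)"
      by (intro exI[of _ V]) blast
  qed
qed

section \<open>Equivariance\<close>

lemma homeomorphic_maps_inv_into:
  assumes "homeomorphic_map X Y f"
  shows "homeomorphic_maps X Y f (inv_into (topspace X) f)"
proof -
  obtain g where g: "homeomorphic_maps X Y f g"
    using assms homeomorphic_map_maps by blast
  have "g y = inv_into (topspace X) f y" if "y \<in> topspace Y" for y
  proof -
    have "g y \<in> topspace X" "f (g y) = y"
      using g that unfolding homeomorphic_maps_def continuous_map_def by auto
    then show ?thesis
      using inv_into_f_f[OF homeomorphic_imp_injective_map[OF assms]] by metis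
  qed
  then show ?thesis
    using homeomorphic_maps_eq[OF g] by blast
qed

lemma act_D_in_Dk:
  assumes "homeomorphic_map X X h" "\<beta> \<in> Dk X k"
  shows "act_D h \<beta> \<in> Dk X k"
proof -
  have len: "length \<beta> = k" and piece: "\<And>i. i < k \<Longrightarrow> openin X (\<beta>!i) \<and> closedin X (\<beta>!i) \<and> \<beta>!i \<noteq> {}"
    and disj: "\<And>i j. i < k \<Longrightarrow> j < k \<Longrightarrow> i \<noteq> j \<Longrightarrow> \<beta>!i \<inter> \<beta>!j = {}"
    and cover: "\<Union>(set \<beta>) = topspace X"
    using assms(2) unfolding Dk_def by auto
  have sub: "\<beta>!i \<subseteq> topspace X" if "i < k" for i
    using piece[OF that] openin_subset by blast
  have nth: "act_D h \<beta> ! i = h ` (\<beta>!i)" if "i < k" for i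
    using that len by (simp add: act_D_def)
  have inj: "inj_on h (topspace X)"
    by (rule homeomorphic_imp_injective_map[OF assms(1)])
  show ?thesis
    unfolding Dk_def
  proof (intro CollectI conjI allI impI)
    show "length (act_D h \<beta>) = k"
      using len by (simp add: act_D_def)
    fix i assume i: "i < k"
    show "openin X (act_D h \<beta> ! i)" "closedin X (act_D h \<beta> ! i)" "act_D h \<beta> ! i \<noteq> {}"
      unfolding nth[OF i] using piece[OF i]
        homeomorphic_map_openness[OF assms(1) sub[OF i]] homeomorphic_map_closedness[OF assms(1) sub[OF i]]
      by auto
    fix j assume j: "j < k" "i \<noteq> j"
    show "act_D h \<beta> ! i \<inter> act_D h \<beta> ! j = {}"
      unfolding nth[OF i] nth[OF j(1)] inj_on_image_Int[OF inj sub[OF i] sub[OF j(1)], symmetric]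
      using disj[OF i j] by simp
  next
    have "\<Union>(set (act_D h \<beta>)) = h ` \<Union>(set \<beta>)"
      by (auto simp: act_D_def)
    then show "\<Union>(set (act_D h \<beta>)) = topspace X"
      using cover homeomorphic_imp_surjective_map[OF assms(1)] by simp
  qed
qed

lemma Dc_subset_topspace:
  assumes "topspace X \<in> c" "A \<subseteq> topspace X" "A \<noteq> {}"
  shows "Dc c A \<subseteq> topspace X"
  using assms unfolding Dc_def by blast

lemma Dc_act_chain:
  assumes "inj_on g (topspace X)" "\<And>F. F \<in> c \<Longrightarrow> F \<subseteq> topspace X" "topspace X \<in> c"
    and "A \<subseteq> topspace X" "A \<noteq> {}"
  shows "Dc (act_chain g c) (g ` A) = g ` Dc c A"
proof -
  let ?P = "{F \<in> c. F \<inter> A \<noteq> {}}"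
  have hit: "g ` F \<inter> g ` A \<noteq> {} \<longleftrightarrow> F \<inter> A \<noteq> {}" if "F \<in> c" for F
    by (simp flip: inj_on_image_Int[OF assms(1) assms(2)[OF that] assms(4)])
  have "{E \<in> act_chain g c. E \<inter> g ` A \<noteq> {}} = (\<lambda>F. g ` F) ` ?P"
  proof (intro set_eqI iffI)
    fix E assume "E \<in> {E \<in> act_chain g c. E \<inter> g ` A \<noteq> {}}"
    then obtain F where F: "F \<in> c" "E = g ` F" "E \<inter> g ` A \<noteq> {}"
      unfolding act_chain_def by blast
    then have "F \<inter> A \<noteq> {}"
      using hit[OF F(1)] by simp
    then show "E \<in> (\<lambda>F. g ` F) ` ?P"
      using F(1,2) by blast
  next
    fix E assume "E \<in> (\<lambda>F. g ` F) ` ?P"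
    then obtain F where "F \<in> c" "F \<inter> A \<noteq> {}" "E = g ` F"
      by blast
    then show "E \<in> {E \<in> act_chain g c. E \<inter> g ` A \<noteq> {}}"
      using hit unfolding act_chain_def by blast
  qed
  moreover have "g ` \<Inter>((\<lambda>F. F) ` ?P) = (\<Inter>F\<in>?P. g ` F)"
    by (rule image_INT[OF assms(1)]) (use assms in blast)+
  ultimately show ?thesis
    unfolding Dc_def by simp
qed

lemma theta_act_chain:
  assumes "compact_space X" "topspace X \<noteq> {}" "homeomorphic_map X X g" "c \<in> Phi X" "\<beta> \<in> Dk X k"
  shows "theta (act_D g \<beta>) (act_chain g c) = theta \<beta> c"
  unfolding act_D_def
proof (rule theta_map[OF Dk_distinct[OF assms(5)] _ inj_on_Dc_Dk[OF assms(1,4,2,5)]])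
  have inj: "inj_on g (topspace X)"
    by (rule homeomorphic_imp_injective_map[OF assms(3)])
  have top: "topspace X \<in> c"
    by (rule topspace_in_Phi[OF assms(4,2)])
  have chain: "F \<subseteq> topspace X" if "F \<in> c" for F
    using Phi_is_chain_Exp[OF assms(4)] that unfolding is_chain_Exp_def Exp_def
    by (auto dest: closedin_subset)
  have pieces: "B \<subseteq> topspace X \<and> B \<noteq> {}" if "B \<in> set \<beta>" for B
    using Dk_clopen[OF assms(5) that] openin_subset by blast
  show "\<forall>x\<in>set \<beta>. \<forall>y\<in>set \<beta>. Dc c x \<subseteq> Dc c y \<or> Dc c y \<subseteq> Dc c x"
    using Dc_linear[OF Phi_is_chain_Exp[OF assms(4)]] by blast
  show "inj_on ((`) g) (set \<beta>)"
    by (rule inj_on_subset[OF inj_on_image_Pow[OF inj]]) (use pieces in blast)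
  fix x y assume "x \<in> set \<beta>" "y \<in> set \<beta>"
  then show "Dc (act_chain g c) (g ` x) \<subseteq> Dc (act_chain g c) (g ` y) \<longleftrightarrow> Dc c x \<subseteq> Dc c y"
    using Dc_act_chain[OF inj chain top] inj_on_image_subset_iff[OF inj]
      Dc_subset_topspace[OF top] pieces by simp
qed

lemma phi_T_act_chain:
  assumes "compact_space X" "topspace X \<noteq> {}" "homeomorphic_map X X g" "c \<in> Phi X"
  shows "phi_T X k T (act_chain g c) = act_Omega X k g (phi_T X k T c)"
proof
  fix \<beta>
  show "phi_T X k T (act_chain g c) \<beta> = act_Omega X k g (phi_T X k T c) \<beta>"
  proof (cases "\<beta> \<in> Dk X k")
    case True
    define h where "h = inv_into (topspace X) g"
    have gh: "homeomorphic_maps X X g h"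
      unfolding h_def by (rule homeomorphic_maps_inv_into[OF assms(3)])
    then have h\<beta>: "act_D h \<beta> \<in> Dk X k"
      using act_D_in_Dk True homeomorphic_maps_map by blast
    have "g ` h ` B = B" if "B \<in> set \<beta>" for B
    proof -
      have "B \<subseteq> topspace X"
        using Dk_clopen[OF True that] openin_subset by blast
      then show ?thesis
        using gh unfolding homeomorphic_maps_def by (force simp: image_image)
    qed
    then have "act_D g (act_D h \<beta>) = \<beta>"
      unfolding act_D_def by (simp add: map_idI)
    then have "theta \<beta> (act_chain g c) = theta (act_D h \<beta>) c"
      using theta_act_chain[OF assms h\<beta>] by simp
    then show ?thesis
      using True h\<beta> by (simp add: phi_T_def act_Omega_def h_def)
  next
    case False
    then show ?thesis by (simp add: phi_T_def act_Omega_def)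
  qed
qed

theorem lemma4p8:
  fixes X :: "'a topology" and k :: nat and T :: "(nat \<Rightarrow> nat) \<Rightarrow> int"
  assumes "infinite (topspace X)"
    and "h_homogeneous X"
    and "X dim_le 0"
    and "compact_space X"
    and "Hausdorff_space X"
    and "k \<ge> 1"
    and "\<And>\<sigma>. \<sigma> permutes {..<k} \<Longrightarrow> T \<sigma> \<in> {1, -1}"
  shows "continuous_map (Phi_top X) (Omega_top X k) (phi_T X k T)
     \<and> (\<forall>g c. homeomorphic_map X X g \<and> c \<in> Phi X \<longrightarrow>
            phi_T X k T (act_chain g c) = act_Omega X k g (phi_T X k T c))"
proof (intro conjI allI impI)
  have nonempty: "topspace X \<noteq> {}"
    using assms(1) by auto
  show "continuous_map (Phi_top X) (Omega_top X k) (phi_T X k T)"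
    by (rule continuous_map_phi_T[OF assms(4) nonempty assms(7)])
  fix g c
  assume "homeomorphic_map X X g \<and> c \<in> Phi X"
  then show "phi_T X k T (act_chain g c) = act_Omega X k g (phi_T X k T c)"
    using phi_T_act_chain[OF assms(4) nonempty] by blast
qed

end
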